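(* Consider EPISODE (described in the context) applied to $f=\frac1N\sum_{i=1}^N f_i$, and suppose: each $f_i$ is twice differentiable with $\|\nabla^2 f_i(x)\|\le L_0+L_1\|\nabla f_i(x)\|$ for all $x$; for all $x$, $\mathbb{E}[\nabla F_i(x;\xi_i)]=\nabla f_i(x)$ and $\|\nabla F_i(x;\xi_i)-\nabla f_i(x)\|\le\sigma$ almost surely ($\xi_i\sim\mathcal{D}_i$); and $\|\nabla f_i(x)\|\le\kappa+\rho\|\nabla f(x)\|$ for all $x,i$, with $\kappa\ge0$, $\rho\ge1$. Fix $C\ge1$ and let $A=1+e^C-\frac{e^C-1}{C}$, $B=\frac{e^C-1}{C}$. Suppose $$2\eta I\big(AL_0+BL_1\kappa+BL_1\rho(\sigma+\gamma/\eta)\big)\le1\quad\text{and}\quad\max\Big\{2\eta I\big(2\sigma+\gamma/\eta\big),\ \gamma I\Big\}\le\frac{C}{L_1}.$$ Then for any round $r$, any $i\in[N]$ and any $t$ with $t-1\in\mathcal{I}_r$, $$\mathbb{E}_r\big[\mathbb{1}_{\mathcal{A}_r}\|x^i_t-\bar{x}_r\|^2\big]\le 36p_rI^2\eta^2\|\nabla f(\bar{x}_r)\|^2+126p_rI^2\eta^2\sigma^2,$$ $$\mathbb{E}_r\big[\mathbb{1}_{\mathcal{A}_r}\|x^i_t-\bar{x}_r\|^2\big]\le 18p_rI^2\eta\gamma\|\nabla f(\bar{x}_r)\|+18p_rI^2\eta^2\big(\gamma\sigma/\eta+5\sigma^2\big).$$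
   Context: Here $f_i(x)=\mathbb{E}_{\xi_i\sim\mathcal{D}_i}[F_i(x;\xi_i)]$ and $\|\cdot\|$ is the Euclidean norm. EPISODE with $N$ clients, communication interval $I\ge1$, step size $\eta>0$, clipping parameter $\gamma>0$: let $t_r=rI$ and $\mathcal{I}_r=\{t_r,\dots,t_{r+1}-1\}$; $\bar{x}_0=x_0$. At the start of round $r$, every client sets $x^i_{t_r}=\bar{x}_r$; each client draws a fresh $\tilde\xi^i_r\sim\mathcal{D}_i$, sets $G^i_r=\nabla F_i(\bar{x}_r;\tilde\xi^i_r)$, and $G_r=\frac1N\sum_i G^i_r$. The event $\mathcal{A}_r=\{\|G_r\|\le\gamma/\eta\}$. For $t\in\mathcal{I}_r$, client $i$ draws fresh $\xi^i_t\sim\mathcal{D}_i$, sets $g^i_t=\nabla F_i(x^i_t;\xi^i_t)-G^i_r+G_r$, and updates $x^i_{t+1}=x^i_t-\eta g^i_t$ on $\mathcal{A}_r$, and $x^i_{t+1}=x^i_t-\gamma g^i_t/\|g^i_t\|$ otherwise. Then $\bar{x}_{r+1}=\frac1N\sum_i x^i_{t_{r+1}}$. All samples are independent. $\mathcal{F}_r$ is the $\sigma$-algebra generated by all samples $\xi^i_t$ ($t\in\mathcal{I}_l$) and $\tilde\xi^i_l$ for rounds $l<r$ (so $\bar{x}_r$ is $\mathcal{F}_r$-measurable), $\mathbb{E}_r[\cdot]=\mathbb{E}[\cdot\mid\mathcal{F}_r]$, and $p_r=\mathbb{E}_r[\mathbb{1}_{\mathcal{A}_r}]=\mathbb{P}(\mathcal{A}_r\mid\mathcal{F}_r)$.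 *)

theory Defs
  imports "HOL-Probability.Probability"
begin

text \<open>One communication round of EPISODE, started from the (conditionally fixed)
  server point xbar.  Clients are 0..N-1; local step k = t - t_r.
  tx i = the sample tilde-xi^i_r, xs i k = the sample xi^i_{t_r+k}.\<close>

definition ep_Gi :: "('a::real_normed_vector \<Rightarrow> 'b \<Rightarrow> 'a) \<Rightarrow> 'a \<Rightarrow> ('m \<Rightarrow> 'b) \<Rightarrow> 'm \<Rightarrow> 'a" where
  "ep_Gi gFi xbar txi \<omega> = gFi xbar (txi \<omega>)"

definition ep_G :: "nat \<Rightarrow> (nat \<Rightarrow> 'a::real_normed_vector \<Rightarrow> 'b \<Rightarrow> 'a) \<Rightarrow> 'a \<Rightarrow> (nat \<Rightarrow> 'm \<Rightarrow> 'b) \<Rightarrow> 'm \<Rightarrow> 'a" where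
  "ep_G N gF xbar tx \<omega> = (1 / real N) *\<^sub>R (\<Sum>i<N. ep_Gi (gF i) xbar (tx i) \<omega>)"

definition ep_event :: "nat \<Rightarrow> real \<Rightarrow> real \<Rightarrow> (nat \<Rightarrow> 'a::real_normed_vector \<Rightarrow> 'b \<Rightarrow> 'a) \<Rightarrow> 'a \<Rightarrow> (nat \<Rightarrow> 'm \<Rightarrow> 'b) \<Rightarrow> 'm set" where
  "ep_event N \<eta> \<gamma> gF xbar tx = {\<omega>. norm (ep_G N gF xbar tx \<omega>) \<le> \<gamma> / \<eta>}"

primrec ep_x :: "nat \<Rightarrow> real \<Rightarrow> real \<Rightarrow> (nat \<Rightarrow> 'a::real_normed_vector \<Rightarrow> 'b \<Rightarrow> 'a) \<Rightarrow> 'a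
   \<Rightarrow> (nat \<Rightarrow> 'm \<Rightarrow> 'b) \<Rightarrow> (nat \<Rightarrow> nat \<Rightarrow> 'm \<Rightarrow> 'b) \<Rightarrow> nat \<Rightarrow> nat \<Rightarrow> 'm \<Rightarrow> 'a" where
  "ep_x N \<eta> \<gamma> gF xbar tx xs i 0 \<omega> = xbar"
| "ep_x N \<eta> \<gamma> gF xbar tx xs i (Suc k) \<omega> =
     (let x = ep_x N \<eta> \<gamma> gF xbar tx xs i k \<omega>;
          g = gF i x (xs i k \<omega>) - ep_Gi (gF i) xbar (tx i) \<omega> + ep_G N gF xbar tx \<omega>
      in if \<omega> \<in> ep_event N \<eta> \<gamma> gF xbar tx then x - \<eta> *\<^sub>R g
         else x - (\<gamma> / norm g) *\<^sub>R g)"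

end

theory Submission
  imports Defs
begin

text \<open>On the event A_r every local step is an unclipped step along
  grad F_i(x_t) - G^i_r + G_r, which differs from G_r by two noise terms of norm at most \<sigma>
  and by grad f_i(x_t) - grad f_i(xbar).  Integrating the (L0,L1)-smoothness bound along
  segments gives |grad f_i(x) - grad f_i(y)| \<le> (L0/L1 + |grad f_i(y)|) (exp (L1 |x - y|) - 1),
  so on the ball of radius C/L1 around xbar the gradient is Lipschitz with constant
  A L0 + B L1 |grad f_i(xbar)|.  The step-size conditions keep the iterates in that ball and
  make the Lipschitz drift at most double the per-step displacement, whence
  |x_t - xbar| \<le> 2 \<eta> I (2 \<sigma> + |G_r|); squaring and using |G_r| \<le> |grad f(xbar)| + \<sigma> and
  |G_r| \<le> \<gamma> / \<eta> gives the two bounds.  The noise bounds hold almost surely along the whole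
  trajectory because each fresh sample is independent of the iterate it is evaluated at.\<close>

lemma exp_secant_le:
  fixes l C :: real
  assumes "0 \<le> l" "l \<le> C" "C > 0"
  shows "exp l - 1 \<le> l * ((exp C - 1) / C)"
proof -
  have "exp ((1 - l/C) *\<^sub>R 0 + (l/C) *\<^sub>R C) \<le> (1 - l/C) * exp 0 + (l/C) * exp C"
    using assms by (intro convex_onD[OF exp_convex]) auto
  then have "exp l \<le> 1 - l/C + l/C * exp C"
    using assms by simp
  moreover have "l * ((exp C - 1) / C) = l/C * exp C - l/C"
    by (simp add: diff_divide_distrib right_diff_distrib)
  ultimately show ?thesis
    by linarith
qed

lemma exp_secant_slope_le:
  fixes C :: real
  assumes "C > 0"
  shows "(exp C - 1) / C \<le> 1 + exp C - (exp C - 1) / C"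
proof -
  define h where "h x = (x - 2) * exp x + x + 2" for x :: real
  have "(h has_real_derivative ((x - 1) * exp x + 1)) (at x)" for x
    unfolding h_def by (auto intro!: derivative_eq_intros simp: algebra_simps)
  moreover have "(x - 1) * exp x + 1 \<ge> 0" for x :: real
  proof -
    have "(1 - x) * exp x \<le> exp (- x) * exp x"
      using exp_ge_add_one_self[of "- x"] by (intro mult_right_mono) auto
    then show ?thesis by (simp add: exp_minus field_simps)
  qed
  ultimately have "h 0 \<le> h C"
    using assms by (intro DERIV_nonneg_imp_nondecreasing[of 0 C h]) auto
  then have "2 * (exp C - 1) \<le> C * (1 + exp C)"
    by (simp add: h_def algebra_simps)
  then have "2 * ((exp C - 1) / C) \<le> 1 + exp C"
    using assms by (simp add: pos_divide_le_eq mult.commute)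
  then show ?thesis
    by linarith
qed

locale L0_L1_smooth =
  fixes g :: "'a::real_normed_vector \<Rightarrow> 'b::real_normed_vector" and H :: "'a \<Rightarrow> 'a \<Rightarrow> 'b"
    and L0 L1 :: real
  assumes has_derivative: "(g has_derivative H x) (at x)"
    and onorm_le: "onorm (H x) \<le> L0 + L1 * norm (g x)"
    and L0_nonneg: "L0 \<ge> 0" and L1_pos: "L1 > 0"
begin

text \<open>On a short segment the derivative bound is applied with the largest deviation on the
  segment, which the step itself then controls.\<close>

lemma deviation_segment_step:
  fixes p q y :: 'a
  defines "c \<equiv> L0 / L1 + norm (g y)"
  assumes short: "L1 * norm (q - p) < 1"
  shows "(norm (g q - g y) + c) * (1 - L1 * norm (q - p)) \<le> norm (g p - g y) + c"
proof -
  let ?S = "closed_segment p q"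
  let ?dev = "\<lambda>z. norm (g z - g y)"
  have "continuous_on ?S ?dev"
    using has_derivative
    by (intro continuous_intros has_derivative_continuous_on) (auto intro: has_derivative_at_withinI)
  then obtain z0 where z0: "z0 \<in> ?S" and max: "\<And>z. z \<in> ?S \<Longrightarrow> ?dev z \<le> ?dev z0"
    using continuous_attains_sup[OF compact_segment] by blast
  define m where "m = ?dev z0"
  have onorm_S: "onorm (H z) \<le> L1 * (c + m)" if "z \<in> ?S" for z
  proof -
    have "norm (g z) \<le> norm (g y) + m"
      using norm_triangle_sub[of "g z" "g y"] max[OF that] by (simp add: m_def)
    then have "L0 + L1 * norm (g z) \<le> L0 + L1 * (norm (g y) + m)"
      using L1_pos by simp
    also have "\<dots> = L1 * (c + m)"
      using L1_pos by (simp add: c_def field_simps)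
    finally show ?thesis
      using onorm_le[of z] by linarith
  qed
  have "norm (g z0 - g p) \<le> L1 * (c + m) * norm (z0 - p)"
    using has_derivative onorm_S z0
    by (intro differentiable_bound[OF convex_closed_segment]) (auto intro: has_derivative_at_withinI)
  also have "\<dots> \<le> L1 * (c + m) * norm (q - p)"
    using segment_bound(1)[OF z0] L1_pos L0_nonneg by (intro mult_left_mono) (auto simp: c_def m_def)
  finally have "m \<le> ?dev p + (c + m) * (L1 * norm (q - p))"
    using norm_triangle_ineq[of "g p - g y" "g z0 - g p"] by (simp add: m_def algebra_simps)
  moreover have "(?dev q + c) * (1 - L1 * norm (q - p)) \<le> (m + c) * (1 - L1 * norm (q - p))"
    using max[of q] short by (intro mult_right_mono) (auto simp: m_def)
  ultimately show ?thesis
    by (simp add: algebra_simps)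
qed

lemma deviation_discrete_bound:
  fixes x y :: 'a and n :: nat
  defines "c \<equiv> L0 / L1 + norm (g y)"
  assumes n: "L1 * norm (x - y) < real n"
  shows "(norm (g x - g y) + c) * (1 - L1 * norm (x - y) / real n) ^ n \<le> c"
proof -
  define \<mu> where "\<mu> = L1 * norm (x - y) / real n"
  define p where "p k = y + (real k / real n) *\<^sub>R (x - y)" for k
  have "0 \<le> L1 * norm (x - y)"
    using L1_pos by simp
  then have n_pos: "n > 0"
    using n by linarith
  have \<mu>_less: "\<mu> < 1"
    using n n_pos by (simp add: \<mu>_def)
  have "(norm (g (p k) - g y) + c) * (1 - \<mu>) ^ k \<le> c" if "k \<le> n" for k
    using that
  proof (induction k)
    case 0
    then show ?case
      by (simp add: p_def)
  next
    case (Suc k)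
    have "p (Suc k) - p k = (1 / real n) *\<^sub>R (x - y)"
      by (simp add: p_def add_divide_distrib scaleR_add_left)
    then have "L1 * norm (p (Suc k) - p k) = \<mu>"
      using L1_pos by (simp add: \<mu>_def)
    then have "(norm (g (p (Suc k)) - g y) + c) * (1 - \<mu>) \<le> norm (g (p k) - g y) + c"
      using deviation_segment_step[of "p (Suc k)" "p k" y] \<mu>_less by (simp add: c_def)
    then have "(norm (g (p (Suc k)) - g y) + c) * (1 - \<mu>) ^ Suc k
        \<le> (norm (g (p k) - g y) + c) * (1 - \<mu>) ^ k"
      using \<mu>_less by (simp only: power_Suc mult.assoc[symmetric]) (intro mult_right_mono, auto)
    also have "\<dots> \<le> c"
      using Suc by simp
    finally show ?case .
  qed
  from this[of n] n_pos show ?thesis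
    by (simp add: p_def \<mu>_def)
qed

lemma deviation_exp_bound:
  "norm (g x - g y) \<le> (L0 / L1 + norm (g y)) * (exp (L1 * norm (x - y)) - 1)"
proof -
  define c where "c = L0 / L1 + norm (g y)"
  define l where "l = L1 * norm (x - y)"
  have "(norm (g x - g y) + c) * exp (- l) \<le> c"
  proof (rule tendsto_le[OF sequentially_bot tendsto_const])
    show "(\<lambda>n. (norm (g x - g y) + c) * (1 + (- l) / real n) ^ n)
        \<longlonglongrightarrow> (norm (g x - g y) + c) * exp (- l)"
      by (intro tendsto_mult tendsto_const tendsto_exp_limit_sequentially)
    show "\<forall>\<^sub>F n in sequentially. (norm (g x - g y) + c) * (1 + (- l) / real n) ^ n \<le> c"
    proof (rule eventually_sequentiallyI[of "nat \<lceil>l\<rceil> + 1"])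
      fix n
      assume "nat \<lceil>l\<rceil> + 1 \<le> n"
      then have "l < real n"
        by linarith
      then show "(norm (g x - g y) + c) * (1 + (- l) / real n) ^ n \<le> c"
        using deviation_discrete_bound[of x y n] by (simp add: c_def l_def)
    qed
  qed
  then show ?thesis
    by (simp add: c_def l_def exp_minus field_simps)
qed

lemma borel_measurable: "g \<in> borel_measurable borel"
  using has_derivative
  by (intro borel_measurable_continuous_onI continuous_at_imp_continuous_on ballI has_derivative_continuous) auto

lemma lipschitz_on_ball:
  assumes C: "C > 0" and close: "norm (x - y) \<le> C / L1"
  shows "norm (g x - g y)
    \<le> ((1 + exp C - (exp C - 1) / C) * L0 + (exp C - 1) / C * L1 * norm (g y)) * norm (x - y)"
proof -
  have "norm (g x - g y) \<le> (L0 / L1 + norm (g y)) * (exp (L1 * norm (x - y)) - 1)"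
    by (rule deviation_exp_bound)
  also have "\<dots> \<le> (L0 / L1 + norm (g y)) * (L1 * norm (x - y) * ((exp C - 1) / C))"
    using exp_secant_le[of "L1 * norm (x - y)" C] close C L0_nonneg L1_pos
    by (intro mult_left_mono) (auto simp: pos_le_divide_eq mult.commute)
  also have "\<dots> = ((exp C - 1) / C * L0 + (exp C - 1) / C * L1 * norm (g y)) * norm (x - y)"
    using L1_pos C by (simp add: field_simps)
  also have "\<dots> \<le> ((1 + exp C - (exp C - 1) / C) * L0 + (exp C - 1) / C * L1 * norm (g y)) * norm (x - y)"
    using exp_secant_slope_le[OF C] L0_nonneg by (intro mult_right_mono add_right_mono mult_right_mono) auto
  finally show ?thesis .
qed

end

lemma (in prob_space) AE_norm_le_imp_nonneg:
  assumes "AE x in M. norm (f x) \<le> c"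
  shows "c \<ge> 0"
proof -
  from assms have "AE x in M. 0 \<le> c"
    by eventually_elim (use norm_ge_zero order_trans in blast)
  then show ?thesis
    by simp
qed

lemma (in prob_space) indep_var_AE_pair:
  assumes indep: "indep_var S X T Y"
    and pred: "Measurable.pred (S \<Otimes>\<^sub>M T) (\<lambda>(a, b). P a b)"
    and AE: "\<And>a. a \<in> space S \<Longrightarrow> AE \<omega> in M. P a (Y \<omega>)"
  shows "AE \<omega> in M. P (X \<omega>) (Y \<omega>)"
proof -
  have X: "random_variable S X" and Y: "random_variable T Y"
    and joint: "distr M S X \<Otimes>\<^sub>M distr M T Y = distr M (S \<Otimes>\<^sub>M T) (\<lambda>\<omega>. (X \<omega>, Y \<omega>))"
    using indep unfolding indep_var_distribution_eq by auto
  interpret pair_sigma_finite "distr M S X" "distr M T Y"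
    by (intro pair_sigma_finite.intro prob_space_imp_sigma_finite prob_space_distr X Y)
  have "Measurable.pred (distr M S X \<Otimes>\<^sub>M distr M T Y) (\<lambda>(a, b). P a b)"
    using pred by (subst measurable_cong_sets[OF sets_pair_measure_cong[OF sets_distr sets_distr] refl])
  then have "{p \<in> space (distr M S X \<Otimes>\<^sub>M distr M T Y). case p of (a, b) \<Rightarrow> P a b}
      \<in> sets (distr M S X \<Otimes>\<^sub>M distr M T Y)"
    by measurable
  moreover have "AE a in distr M S X. AE b in distr M T Y. case (a, b) of (a, b) \<Rightarrow> P a b"
  proof (rule AE_I2)
    fix a
    assume "a \<in> space (distr M S X)"
    then have a: "a \<in> space S"
      by simp
    have "Measurable.pred T (P a)"
      using measurable_Pair2[OF pred a] by simp
    with Y AE[OF a] show "AE b in distr M T Y. case (a, b) of (a, b) \<Rightarrow> P a b"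
      by (simp add: AE_distr_iff)
  qed
  ultimately have "AE p in distr M (S \<Otimes>\<^sub>M T) (\<lambda>\<omega>. (X \<omega>, Y \<omega>)). case p of (a, b) \<Rightarrow> P a b"
    unfolding joint[symmetric] by (rule AE_pair_measure)
  from AE_distrD[OF measurable_Pair[OF X Y] this] show ?thesis
    by simp
qed

lemma (in finite_measure) integral_indicator_mult_le:
  fixes h :: "'a \<Rightarrow> real"
  assumes E: "E \<inter> space M \<in> sets M" and b: "b \<ge> 0" and h: "AE \<omega> in M. \<omega> \<in> E \<longrightarrow> h \<omega> \<le> b"
  shows "(\<integral>\<omega>. indicator E \<omega> * h \<omega> \<partial>M) \<le> b * measure M (E \<inter> space M)"
proof -
  have "(\<integral>\<omega>. indicator E \<omega> * h \<omega> \<partial>M) \<le> (\<integral>\<omega>. b * indicator (E \<inter> space M) \<omega> \<partial>M)"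
  proof (rule integral_mono_AE')
    show "integrable M (\<lambda>\<omega>. b * indicator (E \<inter> space M) \<omega>)"
      using E by (simp add: emeasure_eq_measure)
    show "AE \<omega> in M. indicator E \<omega> * h \<omega> \<le> b * indicator (E \<inter> space M) \<omega>"
      using h AE_space by eventually_elim (auto simp: indicator_def)
    show "AE \<omega> in M. 0 \<le> b * indicator (E \<inter> space M) \<omega>"
      using b by simp
  qed
  also have "\<dots> = b * measure M (E \<inter> space M)"
    using E by simp
  finally show ?thesis .
qed

lemma ep_G_cong:
  assumes "\<And>j. j < N \<Longrightarrow> tx j \<omega> = tx' j \<omega>'"
  shows "ep_G N gF xbar tx \<omega> = ep_G N gF xbar tx' \<omega>'"
  unfolding ep_G_def ep_Gi_def using assms by (intro arg_cong2[where f=scaleR] refl sum.cong) auto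

lemma ep_x_cong:
  assumes i: "i < N" and tx: "\<And>j. j < N \<Longrightarrow> tx j \<omega> = tx' j \<omega>'"
    and xs: "\<And>s. s < k \<Longrightarrow> xs i s \<omega> = xs' i s \<omega>'"
  shows "ep_x N \<eta> \<gamma> gF xbar tx xs i k \<omega> = ep_x N \<eta> \<gamma> gF xbar tx' xs' i k \<omega>'"
  using xs
proof (induction k)
  case 0
  then show ?case
    by simp
next
  case (Suc k)
  have G: "ep_G N gF xbar tx \<omega> = ep_G N gF xbar tx' \<omega>'"
    using tx by (rule ep_G_cong)
  have "ep_Gi (gF i) xbar (tx i) \<omega> = ep_Gi (gF i) xbar (tx' i) \<omega>'"
    using tx[OF i] by (simp add: ep_Gi_def)
  with Suc G show ?case
    by (simp add: Let_def ep_event_def)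
qed

lemma borel_measurable_ep_G:
  fixes gF :: "nat \<Rightarrow> 'a::euclidean_space \<Rightarrow> 'b \<Rightarrow> 'a"
  assumes gF: "\<And>j. j < N \<Longrightarrow> (\<lambda>(x, \<xi>). gF j x \<xi>) \<in> borel_measurable (borel \<Otimes>\<^sub>M D j)"
    and tx: "\<And>j. j < N \<Longrightarrow> tx j \<in> measurable \<Omega> (D j)"
  shows "ep_G N gF xbar tx \<in> borel_measurable \<Omega>"
proof -
  have "(\<lambda>\<omega>. gF j xbar (tx j \<omega>)) \<in> borel_measurable \<Omega>" if "j < N" for j
    using gF[OF that] tx[OF that] by measurable
  then have "(\<lambda>\<omega>. \<Sum>j<N. gF j xbar (tx j \<omega>)) \<in> borel_measurable \<Omega>"
    by (rule borel_measurable_sum[of "{..<N}" "\<lambda>j \<omega>. gF j xbar (tx j \<omega>)"]) auto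
  then show ?thesis
    unfolding ep_G_def ep_Gi_def by measurable
qed

lemma borel_measurable_ep_x:
  fixes gF :: "nat \<Rightarrow> 'a::euclidean_space \<Rightarrow> 'b \<Rightarrow> 'a"
  assumes i: "i < N"
    and gF: "\<And>j. j < N \<Longrightarrow> (\<lambda>(x, \<xi>). gF j x \<xi>) \<in> borel_measurable (borel \<Otimes>\<^sub>M D j)"
    and tx: "\<And>j. j < N \<Longrightarrow> tx j \<in> measurable \<Omega> (D j)"
    and xs: "\<And>s. s < k \<Longrightarrow> xs i s \<in> measurable \<Omega> (D i)"
  shows "ep_x N \<eta> \<gamma> gF xbar tx xs i k \<in> borel_measurable \<Omega>"
  using xs
proof (induction k)
  case 0
  then show ?case
    by simp
next
  case (Suc k)
  have x: "ep_x N \<eta> \<gamma> gF xbar tx xs i k \<in> borel_measurable \<Omega>"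
    using Suc by simp
  have G: "ep_G N gF xbar tx \<in> borel_measurable \<Omega>"
    using gF tx by (rule borel_measurable_ep_G)
  have event: "Measurable.pred \<Omega> (\<lambda>\<omega>. \<omega> \<in> ep_event N \<eta> \<gamma> gF xbar tx)"
    unfolding ep_event_def mem_Collect_eq using G by measurable
  define step where "step \<omega> = gF i (ep_x N \<eta> \<gamma> gF xbar tx xs i k \<omega>) (xs i k \<omega>)
    - gF i xbar (tx i \<omega>) + ep_G N gF xbar tx \<omega>" for \<omega>
  have local: "(\<lambda>\<omega>. gF i (ep_x N \<eta> \<gamma> gF xbar tx xs i k \<omega>) (xs i k \<omega>)) \<in> borel_measurable \<Omega>"
    and server: "(\<lambda>\<omega>. gF i xbar (tx i \<omega>)) \<in> borel_measurable \<Omega>"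
    using gF[OF i] x Suc.prems[of k] tx[OF i] by measurable
  have "step \<in> borel_measurable \<Omega>"
    unfolding step_def by (rule borel_measurable_add[OF borel_measurable_diff[OF local server] G])
  moreover have "ep_x N \<eta> \<gamma> gF xbar tx xs i (Suc k) = (\<lambda>\<omega>.
      if \<omega> \<in> ep_event N \<eta> \<gamma> gF xbar tx then ep_x N \<eta> \<gamma> gF xbar tx xs i k \<omega> - \<eta> *\<^sub>R step \<omega>
      else ep_x N \<eta> \<gamma> gF xbar tx xs i k \<omega> - (\<gamma> / norm (step \<omega>)) *\<^sub>R step \<omega>)"
    by (simp add: fun_eq_iff Let_def step_def ep_Gi_def)
  ultimately show ?case
    using x event by simp
qed

lemma borel_measurable_ep_x_coordinates:
  fixes gF :: "nat \<Rightarrow> 'a::euclidean_space \<Rightarrow> 'b \<Rightarrow> 'a"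
  assumes i: "i < N"
    and gF: "\<And>j. j < N \<Longrightarrow> (\<lambda>(x, \<xi>). gF j x \<xi>) \<in> borel_measurable (borel \<Otimes>\<^sub>M D j)"
    and J: "\<And>j. j < N \<Longrightarrow> Inl j \<in> J" "\<And>s. s < k \<Longrightarrow> Inr (i, s) \<in> J"
  shows "(\<lambda>\<omega>. ep_x N \<eta> \<gamma> gF xbar (\<lambda>j \<omega>. \<omega> (Inl j)) (\<lambda>i' s \<omega>. \<omega> (Inr (i', s))) i k \<omega>)
    \<in> borel_measurable (PiM J (\<lambda>j. case j of Inl i \<Rightarrow> D i | Inr (i, s) \<Rightarrow> D i))"
proof (rule borel_measurable_ep_x[OF i gF])
  show "(\<lambda>\<omega>. \<omega> (Inl j)) \<in> measurable (PiM J (\<lambda>j. case j of Inl i \<Rightarrow> D i | Inr (i, s) \<Rightarrow> D i)) (D j)"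
    if "j < N" for j
    using measurable_component_singleton[of "Inl j" J "\<lambda>j. case j of Inl i \<Rightarrow> D i | Inr (i, s) \<Rightarrow> D i"]
      J(1)[OF that] by simp
  show "(\<lambda>\<omega>. \<omega> (Inr (i, s))) \<in> measurable (PiM J (\<lambda>j. case j of Inl i \<Rightarrow> D i | Inr (i, s) \<Rightarrow> D i)) (D i)"
    if "s < k" for s
    using measurable_component_singleton[of "Inr (i, s)" J "\<lambda>j. case j of Inl i \<Rightarrow> D i | Inr (i, s) \<Rightarrow> D i"]
      J(2)[OF that] by simp
qed

lemma sets_ep_event:
  fixes gF :: "nat \<Rightarrow> 'a::euclidean_space \<Rightarrow> 'b \<Rightarrow> 'a"
  assumes "\<And>j. j < N \<Longrightarrow> (\<lambda>(x, \<xi>). gF j x \<xi>) \<in> borel_measurable (borel \<Otimes>\<^sub>M D j)"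
    and "\<And>j. j < N \<Longrightarrow> tx j \<in> measurable M (D j)"
  shows "ep_event N \<eta> \<gamma> gF xbar tx \<inter> space M \<in> sets M"
proof -
  have "ep_G N gF xbar tx \<in> borel_measurable M"
    using assms by (rule borel_measurable_ep_G)
  then have "{\<omega> \<in> space M. norm (ep_G N gF xbar tx \<omega>) \<le> \<gamma> / \<eta>} \<in> sets M"
    by measurable
  then show ?thesis
    by (simp add: ep_event_def Int_def conj_commute)
qed

text \<open>The iterate after s local steps is a measurable function of the server samples and of
  the first s samples of client i only, hence independent of the fresh sample xs i s.\<close>

lemma ep_local_noise_AE:
  fixes gF :: "nat \<Rightarrow> 'a::euclidean_space \<Rightarrow> 'b \<Rightarrow> 'a"
  assumes M: "prob_space M"
    and gF: "\<And>j. j < N \<Longrightarrow> (\<lambda>(x, \<xi>). gF j x \<xi>) \<in> borel_measurable (borel \<Otimes>\<^sub>M D j)"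
    and indep: "prob_space.indep_vars M (\<lambda>j. case j of Inl i \<Rightarrow> D i | Inr (i, k) \<Rightarrow> D i)
                  (\<lambda>j. case j of Inl i \<Rightarrow> tx i | Inr (i, k) \<Rightarrow> xs i k)
                  (Inl ` {..<N} \<union> Inr ` ({..<N} \<times> {..<I}))"
    and xs: "xs i s \<in> measurable M (D i)" "distr M (D i) (xs i s) = D i"
    and g: "g \<in> borel_measurable borel"
    and noise: "\<And>x. AE \<xi> in D i. norm (gF i x \<xi> - g x) \<le> \<sigma>"
    and i: "i < N" and s: "s < I"
  shows "AE \<omega> in M. norm (gF i (ep_x N \<eta> \<gamma> gF xbar tx xs i s \<omega>) (xs i s \<omega>)
                      - g (ep_x N \<eta> \<gamma> gF xbar tx xs i s \<omega>)) \<le> \<sigma>"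
proof -
  interpret prob_space M
    by (rule M)
  define MF where "MF = (\<lambda>j :: nat + nat \<times> nat. case j of Inl i \<Rightarrow> D i | Inr (i, k) \<Rightarrow> D i)"
  define XF where "XF = (\<lambda>j :: nat + nat \<times> nat. case j of Inl i \<Rightarrow> tx i | Inr (i, k) \<Rightarrow> xs i k)"
  define past where "past = Inl ` {..<N} \<union> Inr ` ({i} \<times> {..<s})"
  define now where "now = {Inr (i, s) :: nat + nat \<times> nat}"
  define history where "history \<omega>' =
    ep_x N \<eta> \<gamma> gF xbar (\<lambda>j \<omega>'. \<omega>' (Inl j)) (\<lambda>i' k \<omega>'. \<omega>' (Inr (i', k))) i s \<omega>'" for \<omega>'
  have history: "history \<in> borel_measurable (PiM past MF)"
    unfolding history_def MF_def using i gF by (rule borel_measurable_ep_x_coordinates) (auto simp: past_def)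
  have sample: "(\<lambda>\<omega>'. \<omega>' (Inr (i, s))) \<in> measurable (PiM now MF) (D i)"
    using measurable_component_singleton[of "Inr (i, s)" now MF] by (simp add: now_def MF_def)
  define P where "P a (b :: nat + nat \<times> nat \<Rightarrow> 'b) \<longleftrightarrow>
    norm (gF i (history a) (b (Inr (i, s))) - g (history a)) \<le> \<sigma>" for a b
  have "indep_var (PiM past MF) (\<lambda>\<omega>. restrict (\<lambda>j. XF j \<omega>) past)
      (PiM now MF) (\<lambda>\<omega>. restrict (\<lambda>j. XF j \<omega>) now)"
    using i s by (intro indep_var_restrict[OF indep[folded MF_def XF_def]]) (auto simp: past_def now_def)
  then have "AE \<omega> in M. P (restrict (\<lambda>j. XF j \<omega>) past) (restrict (\<lambda>j. XF j \<omega>) now)"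
  proof (rule indep_var_AE_pair)
    show "Measurable.pred (PiM past MF \<Otimes>\<^sub>M PiM now MF) (\<lambda>(a, b). P a b)"
      unfolding P_def using gF[OF i] g history sample by measurable
    show "AE \<omega> in M. P a (restrict (\<lambda>j. XF j \<omega>) now)" for a
    proof -
      have "AE \<xi> in distr M (D i) (xs i s). norm (gF i (history a) \<xi> - g (history a)) \<le> \<sigma>"
        unfolding xs(2) by (rule noise)
      from AE_distrD[OF xs(1) this] show ?thesis
        by (simp add: P_def now_def XF_def)
    qed
  qed
  moreover have "history (restrict (\<lambda>j. XF j \<omega>) past) = ep_x N \<eta> \<gamma> gF xbar tx xs i s \<omega>" for \<omega>
    unfolding history_def by (rule ep_x_cong[OF i]) (auto simp: past_def XF_def)
  ultimately show ?thesis
    by (simp add: P_def now_def XF_def)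
qed

lemma ep_server_noise_AE:
  fixes tx :: "nat \<Rightarrow> 'm \<Rightarrow> 'b" and gF :: "nat \<Rightarrow> 'a::real_normed_vector \<Rightarrow> 'b \<Rightarrow> 'a"
  assumes tx: "\<And>j. j < N \<Longrightarrow> tx j \<in> measurable M (D j) \<and> distr M (D j) (tx j) = D j"
    and noise: "\<And>j x. j < N \<Longrightarrow> AE \<xi> in D j. norm (gF j x \<xi> - g j x) \<le> \<sigma>"
  shows "AE \<omega> in M. \<forall>j<N. norm (gF j xbar (tx j \<omega>) - g j xbar) \<le> \<sigma>"
proof -
  have "AE \<omega> in M. \<forall>j\<in>{..<N}. norm (gF j xbar (tx j \<omega>) - g j xbar) \<le> \<sigma>"
  proof (rule AE_finite_allI[OF finite_lessThan])
    fix j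
    assume "j \<in> {..<N}"
    then have j: "j < N"
      by simp
    have "AE \<xi> in distr M (D j) (tx j). norm (gF j xbar \<xi> - g j xbar) \<le> \<sigma>"
      unfolding conjunct2[OF tx[OF j]] by (rule noise[OF j])
    from AE_distrD[OF conjunct1[OF tx[OF j]] this]
    show "AE \<omega> in M. norm (gF j xbar (tx j \<omega>) - g j xbar) \<le> \<sigma>" .
  qed
  then show ?thesis
    by eventually_elim auto
qed

lemma ep_G_deviation:
  assumes N: "N \<ge> 1" and server: "\<And>j. j < N \<Longrightarrow> norm (gF j xbar (tx j \<omega>) - g j xbar) \<le> \<sigma>"
  shows "norm (ep_G N gF xbar tx \<omega> - (1 / real N) *\<^sub>R (\<Sum>j<N. g j xbar)) \<le> \<sigma>"
proof -
  have "ep_G N gF xbar tx \<omega> - (1 / real N) *\<^sub>R (\<Sum>j<N. g j xbar)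
      = (1 / real N) *\<^sub>R (\<Sum>j<N. gF j xbar (tx j \<omega>) - g j xbar)"
    by (simp add: ep_G_def ep_Gi_def sum_subtractf scaleR_diff_right)
  also have "norm \<dots> \<le> (1 / real N) * (\<Sum>j<N. norm (gF j xbar (tx j \<omega>) - g j xbar))"
    using norm_sum[of "\<lambda>j. gF j xbar (tx j \<omega>) - g j xbar" "{..<N}"] by (simp add: divide_right_mono)
  also have "\<dots> \<le> (1 / real N) * (\<Sum>j<N. \<sigma>)"
    using server by (intro mult_left_mono sum_mono) auto
  also have "\<dots> = \<sigma>"
    using N by simp
  finally show ?thesis .
qed

lemma norm_corrected_step_le:
  fixes a b c u v :: "'a::real_normed_vector"
  assumes "norm (a - u) \<le> \<sigma>" "norm (b - v) \<le> \<sigma>"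
  shows "norm (a - b + c) \<le> 2 * \<sigma> + norm c + norm (u - v)"
proof -
  have "norm (a - b + c) \<le> norm (a - u) + norm (u - v) + norm (b - v) + norm c"
    by norm
  with assms show ?thesis
    by linarith
qed

text \<open>While the iterate stays within the radius R, the drift of the direction from its value
  at xbar is at most K times the distance travelled; as 2 \<eta> I K \<le> 1, this at most doubles the
  per-step displacement, which in turn keeps the iterate within R.\<close>

lemma ep_x_drift_le:
  fixes gF :: "nat \<Rightarrow> 'a::real_normed_vector \<Rightarrow> 'b \<Rightarrow> 'a" and g :: "'a \<Rightarrow> 'a"
    and tx :: "nat \<Rightarrow> 'm \<Rightarrow> 'b" and xs :: "nat \<Rightarrow> nat \<Rightarrow> 'm \<Rightarrow> 'b" and \<omega> :: 'm
    and N i :: nat and \<eta> \<gamma> :: real and xbar :: 'a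
  defines "X \<equiv> \<lambda>s. ep_x N \<eta> \<gamma> gF xbar tx xs i s \<omega>"
    and "G \<equiv> ep_G N gF xbar tx \<omega>"
  assumes event: "\<omega> \<in> ep_event N \<eta> \<gamma> gF xbar tx"
    and \<eta>: "\<eta> > 0" and \<sigma>: "\<sigma> \<ge> 0"
    and server: "norm (gF i xbar (tx i \<omega>) - g xbar) \<le> \<sigma>"
    and local: "\<And>s. s < k \<Longrightarrow> norm (gF i (X s) (xs i s \<omega>) - g (X s)) \<le> \<sigma>"
    and lipschitz: "\<And>z. norm (z - xbar) \<le> R \<Longrightarrow> norm (g z - g xbar) \<le> K * norm (z - xbar)"
    and K: "K \<ge> 0" "2 * \<eta> * real I * K \<le> 1"
    and R: "2 * \<eta> * real I * (2 * \<sigma> + \<gamma> / \<eta>) \<le> R"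
    and k: "k \<le> I"
  shows "norm (X k - xbar) \<le> 2 * \<eta> * real k * (2 * \<sigma> + norm G)"
  using k local
proof (induction k)
  case 0
  then show ?case
    by (simp add: X_def)
next
  case (Suc k)
  define Q where "Q = 2 * \<sigma> + norm G"
  define d where "d = norm (X k - xbar)"
  have Q: "0 \<le> Q" "Q \<le> 2 * \<sigma> + \<gamma> / \<eta>"
    using \<sigma> event by (auto simp: Q_def G_def ep_event_def)
  have IH: "d \<le> 2 * \<eta> * real k * Q"
    using Suc by (simp add: d_def Q_def)
  also have "\<dots> \<le> 2 * \<eta> * real I * Q"
    using Suc.prems(1) Q \<eta> by (intro mult_right_mono mult_left_mono) auto
  finally have d_le: "d \<le> 2 * \<eta> * real I * Q" .
  have "2 * \<eta> * real I * Q \<le> 2 * \<eta> * real I * (2 * \<sigma> + \<gamma> / \<eta>)"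
    using Q \<eta> by (intro mult_left_mono) auto
  with d_le R have "norm (g (X k) - g xbar) \<le> K * d"
    using lipschitz by (simp add: d_def)
  define dir where "dir = gF i (X k) (xs i k \<omega>) - ep_Gi (gF i) xbar (tx i) \<omega> + G"
  have "norm dir \<le> Q + K * d"
    using norm_corrected_step_le[OF Suc.prems(2)[of k] server, of G]
      \<open>norm (g (X k) - g xbar) \<le> K * d\<close>
    by (simp add: dir_def ep_Gi_def Q_def)
  have "X (Suc k) - xbar = (X k - xbar) - \<eta> *\<^sub>R dir"
    using event by (simp add: X_def dir_def G_def Let_def algebra_simps)
  then have "norm (X (Suc k) - xbar) \<le> d + norm (\<eta> *\<^sub>R dir)"
    unfolding d_def by (metis norm_triangle_ineq4)
  also have "\<dots> = d + \<eta> * norm dir"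
    using \<eta> by simp
  also have "\<dots> \<le> d + \<eta> * (Q + K * d)"
    using \<open>norm dir \<le> Q + K * d\<close> \<eta> by simp
  also have "\<dots> = d + \<eta> * Q + \<eta> * K * d"
    by (simp add: algebra_simps)
  also have "\<eta> * K * d \<le> \<eta> * Q * (2 * \<eta> * real I * K)"
    using mult_left_mono[OF d_le, of "\<eta> * K"] \<eta> K by (simp add: mult_ac)
  also have "\<dots> \<le> \<eta> * Q"
    using K Q \<eta> by (intro mult_left_le) auto
  finally show ?case
    using IH by (simp add: d_def Q_def algebra_simps)
qed

lemma drift_sq_le_grad_sq:
  fixes \<sigma> \<eta> r u F d :: real
  assumes d: "0 \<le> d" "d \<le> 2 * \<eta> * r * (2 * \<sigma> + u)" and u: "\<sigma> \<ge> 0" "0 \<le> u" "u \<le> F + \<sigma>"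
  shows "d\<^sup>2 \<le> 36 * r\<^sup>2 * \<eta>\<^sup>2 * F\<^sup>2 + 126 * r\<^sup>2 * \<eta>\<^sup>2 * \<sigma>\<^sup>2"
proof -
  have "(2 * \<sigma> + u)\<^sup>2 \<le> (F + 3 * \<sigma>)\<^sup>2"
    using u by (intro power_mono) auto
  also have "\<dots> \<le> 2 * F\<^sup>2 + 18 * \<sigma>\<^sup>2"
    using sum_squares_ge_zero[of "F - 3 * \<sigma>" 0] by (simp add: power2_eq_square algebra_simps)
  also have "\<dots> \<le> 9 * F\<^sup>2 + 63 / 2 * \<sigma>\<^sup>2"
    using zero_le_power2[of F] zero_le_power2[of \<sigma>] by linarith
  finally have u_sq: "(2 * \<sigma> + u)\<^sup>2 \<le> 9 * F\<^sup>2 + 63 / 2 * \<sigma>\<^sup>2" .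
  have "d\<^sup>2 \<le> (2 * \<eta> * r * (2 * \<sigma> + u))\<^sup>2"
    by (rule power_mono[OF d(2) d(1)])
  also have "\<dots> = 4 * (r\<^sup>2 * \<eta>\<^sup>2) * (2 * \<sigma> + u)\<^sup>2"
    by (simp add: power2_eq_square algebra_simps)
  also have "\<dots> \<le> 4 * (r\<^sup>2 * \<eta>\<^sup>2) * (9 * F\<^sup>2 + 63 / 2 * \<sigma>\<^sup>2)"
    using u_sq by (intro mult_left_mono) auto
  also have "\<dots> = 36 * r\<^sup>2 * \<eta>\<^sup>2 * F\<^sup>2 + 126 * r\<^sup>2 * \<eta>\<^sup>2 * \<sigma>\<^sup>2"
    by (simp add: algebra_simps)
  finally show ?thesis .
qed

text \<open>The clipping threshold enters through u^2 \<le> u \<gamma> / \<eta>.\<close>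

lemma drift_sq_le_grad_norm:
  fixes \<sigma> \<eta> \<gamma> r u F d :: real
  assumes d: "0 \<le> d" "d \<le> 2 * \<eta> * r * (2 * \<sigma> + u)"
    and \<sigma>: "\<sigma> \<ge> 0" and \<eta>: "\<eta> > 0" and \<gamma>: "\<gamma> > 0"
    and u: "0 \<le> u" "u \<le> F + \<sigma>" "u \<le> \<gamma> / \<eta>"
  shows "d\<^sup>2 \<le> 18 * r\<^sup>2 * \<eta> * \<gamma> * F + 18 * r\<^sup>2 * \<eta>\<^sup>2 * (\<gamma> * \<sigma> / \<eta> + 5 * \<sigma>\<^sup>2)"
proof -
  have "(2 * \<sigma> + u)\<^sup>2 \<le> 8 * \<sigma>\<^sup>2 + 2 * u\<^sup>2"
    using sum_squares_ge_zero[of "2 * \<sigma> - u" 0] by (simp add: power2_eq_square algebra_simps)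
  moreover have "u\<^sup>2 \<le> (F + \<sigma>) * (\<gamma> / \<eta>)"
    using mult_mono[OF u(2) u(3)] u by (simp add: power2_eq_square)
  ultimately have "(2 * \<sigma> + u)\<^sup>2 \<le> 8 * \<sigma>\<^sup>2 + 2 * (F + \<sigma>) * (\<gamma> / \<eta>)"
    by linarith
  also have "\<dots> \<le> 45 / 2 * \<sigma>\<^sup>2 + 9 / 2 * (F + \<sigma>) * (\<gamma> / \<eta>)"
    using u \<gamma> \<eta> zero_le_power2[of \<sigma>] mult_nonneg_nonneg[of "F + \<sigma>" "\<gamma> / \<eta>"] by linarith
  finally have u_sq: "(2 * \<sigma> + u)\<^sup>2 \<le> 45 / 2 * \<sigma>\<^sup>2 + 9 / 2 * (F + \<sigma>) * (\<gamma> / \<eta>)" .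
  have "d\<^sup>2 \<le> (2 * \<eta> * r * (2 * \<sigma> + u))\<^sup>2"
    by (rule power_mono[OF d(2) d(1)])
  also have "\<dots> = 4 * (r\<^sup>2 * \<eta>\<^sup>2) * (2 * \<sigma> + u)\<^sup>2"
    by (simp add: power2_eq_square algebra_simps)
  also have "\<dots> \<le> 4 * (r\<^sup>2 * \<eta>\<^sup>2) * (45 / 2 * \<sigma>\<^sup>2 + 9 / 2 * (F + \<sigma>) * (\<gamma> / \<eta>))"
    using u_sq by (intro mult_left_mono) auto
  also have "\<dots> = 18 * r\<^sup>2 * \<eta> * \<gamma> * F + 18 * r\<^sup>2 * \<eta>\<^sup>2 * (\<gamma> * \<sigma> / \<eta> + 5 * \<sigma>\<^sup>2)"
    using \<eta> by (simp add: power2_eq_square field_simps)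
  finally show ?thesis .
qed

lemma ep_drift_sq_bounds:
  fixes gF :: "nat \<Rightarrow> 'a::real_normed_vector \<Rightarrow> 'b \<Rightarrow> 'a" and g :: "nat \<Rightarrow> 'a \<Rightarrow> 'a"
    and tx :: "nat \<Rightarrow> 'm \<Rightarrow> 'b" and xs :: "nat \<Rightarrow> nat \<Rightarrow> 'm \<Rightarrow> 'b" and \<omega> :: 'm
    and N I i k :: nat and \<eta> \<gamma> \<sigma> \<kappa> \<rho> L0 L1 C :: real and xbar :: 'a
  defines "F \<equiv> norm ((1 / real N) *\<^sub>R (\<Sum>j<N. g j xbar))"
    and "d \<equiv> norm (ep_x N \<eta> \<gamma> gF xbar tx xs i k \<omega> - xbar)"
  assumes smooth: "L0_L1_smooth (g i) (H i) L0 L1"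
    and N: "N \<ge> 1" and i: "i < N" and k: "k \<le> I"
    and \<eta>: "\<eta> > 0" and \<gamma>: "\<gamma> > 0" and \<sigma>: "\<sigma> \<ge> 0" and \<rho>: "\<rho> \<ge> 0" and C: "C > 0"
    and hetero: "norm (g i xbar) \<le> \<kappa> + \<rho> * F"
    and step1: "2 * \<eta> * real I * ((1 + exp C - (exp C - 1) / C) * L0 + ((exp C - 1) / C) * L1 * \<kappa>
                 + ((exp C - 1) / C) * L1 * \<rho> * (\<sigma> + \<gamma> / \<eta>)) \<le> 1"
    and step2: "2 * \<eta> * real I * (2 * \<sigma> + \<gamma> / \<eta>) \<le> C / L1"
    and event: "\<omega> \<in> ep_event N \<eta> \<gamma> gF xbar tx"
    and server: "\<forall>j<N. norm (gF j xbar (tx j \<omega>) - g j xbar) \<le> \<sigma>"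
    and local: "\<forall>s<k. norm (gF i (ep_x N \<eta> \<gamma> gF xbar tx xs i s \<omega>) (xs i s \<omega>)
                             - g i (ep_x N \<eta> \<gamma> gF xbar tx xs i s \<omega>)) \<le> \<sigma>"
  shows "d\<^sup>2 \<le> 36 * (real I)\<^sup>2 * \<eta>\<^sup>2 * F\<^sup>2 + 126 * (real I)\<^sup>2 * \<eta>\<^sup>2 * \<sigma>\<^sup>2
    \<and> d\<^sup>2 \<le> 18 * (real I)\<^sup>2 * \<eta> * \<gamma> * F + 18 * (real I)\<^sup>2 * \<eta>\<^sup>2 * (\<gamma> * \<sigma> / \<eta> + 5 * \<sigma>\<^sup>2)"
proof -
  interpret L0_L1_smooth "g i" "H i" L0 L1
    by (rule smooth)
  define A where "A = 1 + exp C - (exp C - 1) / C"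
  define B where "B = (exp C - 1) / C"
  define G where "G = norm (ep_G N gF xbar tx \<omega>)"
  have "norm (ep_G N gF xbar tx \<omega> - (1 / real N) *\<^sub>R (\<Sum>j<N. g j xbar)) \<le> \<sigma>"
    using N server by (intro ep_G_deviation) auto
  then have "\<bar>G - F\<bar> \<le> \<sigma>"
    unfolding F_def G_def by (rule order_trans[OF norm_triangle_ineq3])
  then have G_F: "G \<le> F + \<sigma>" and F_G: "F \<le> G + \<sigma>"
    by linarith+
  have G_event: "G \<le> \<gamma> / \<eta>"
    using event by (simp add: G_def ep_event_def)
  have B: "0 \<le> B" "B \<le> A"
    using C exp_secant_slope_le[OF C] by (auto simp: A_def B_def)
  define K where "K = A * L0 + B * L1 * norm (g i xbar)"
  have K: "0 \<le> K"
    using B L0_nonneg L1_pos by (simp add: K_def)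
  have "F \<le> \<sigma> + \<gamma> / \<eta>"
    using F_G G_event by linarith
  then have "norm (g i xbar) \<le> \<kappa> + \<rho> * (\<sigma> + \<gamma> / \<eta>)"
    using hetero mult_left_mono[OF _ \<rho>] by fastforce
  then have "K \<le> A * L0 + B * L1 * \<kappa> + B * L1 * \<rho> * (\<sigma> + \<gamma> / \<eta>)"
    using B L1_pos mult_left_mono[of _ _ "B * L1"] by (fastforce simp: K_def algebra_simps)
  then have "2 * \<eta> * real I * K \<le> 2 * \<eta> * real I * (A * L0 + B * L1 * \<kappa> + B * L1 * \<rho> * (\<sigma> + \<gamma> / \<eta>))"
    using \<eta> by (intro mult_left_mono) auto
  also have "\<dots> \<le> 1"
    using step1 by (simp add: A_def B_def)
  finally have "2 * \<eta> * real I * K \<le> 1" .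
  moreover have "norm (g i z - g i xbar) \<le> K * norm (z - xbar)" if "norm (z - xbar) \<le> C / L1" for z
    using lipschitz_on_ball[OF C that] by (simp add: K_def A_def B_def)
  ultimately have "d \<le> 2 * \<eta> * real k * (2 * \<sigma> + G)"
    unfolding d_def G_def using event \<eta> \<sigma> server i local step2 k K
    by (intro ep_x_drift_le[where R = "C / L1" and K = K]) auto
  also have "\<dots> \<le> 2 * \<eta> * real I * (2 * \<sigma> + G)"
    using k \<eta> \<sigma> by (intro mult_right_mono mult_left_mono) (auto simp: G_def)
  finally have "d \<le> 2 * \<eta> * real I * (2 * \<sigma> + G)" .
  moreover have "0 \<le> d" "0 \<le> G"
    by (simp_all add: d_def G_def)
  ultimately show ?thesis
    using drift_sq_le_grad_sq \<sigma> G_F drift_sq_le_grad_norm \<eta> \<gamma> G_event by blast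
qed

theorem lemma3:
  fixes M :: "'m measure" and D :: "nat \<Rightarrow> 'b measure"
    and f :: "nat \<Rightarrow> 'a::euclidean_space \<Rightarrow> real"
    and g :: "nat \<Rightarrow> 'a \<Rightarrow> 'a" and H :: "nat \<Rightarrow> 'a \<Rightarrow> 'a \<Rightarrow> 'a"
    and gF :: "nat \<Rightarrow> 'a \<Rightarrow> 'b \<Rightarrow> 'a"
    and tx :: "nat \<Rightarrow> 'm \<Rightarrow> 'b" and xs :: "nat \<Rightarrow> nat \<Rightarrow> 'm \<Rightarrow> 'b"
    and N I :: nat and \<eta> \<gamma> L0 L1 \<sigma> \<kappa> \<rho> C :: real and xbar :: 'a
  assumes N: "N \<ge> 1" and I: "I \<ge> 1" and eta: "\<eta> > 0" and gam: "\<gamma> > 0"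
    and L0: "L0 \<ge> 0" and L1: "L1 > 0" and kappa: "\<kappa> \<ge> 0" and rho: "\<rho> \<ge> 1"
    \<comment> \<open>twice differentiable, g i = gradient of f i, H i x = Hessian of f i at x\<close>
    and grad: "\<And>i x. i < N \<Longrightarrow> (f i has_derivative (\<lambda>h. g i x \<bullet> h)) (at x)"
    and hess: "\<And>i x. i < N \<Longrightarrow> (g i has_derivative H i x) (at x)"
    and smooth: "\<And>i x. i < N \<Longrightarrow> onorm (H i x) \<le> L0 + L1 * norm (g i x)"
    \<comment> \<open>stochastic gradient oracle\<close>
    and Dprob: "\<And>i. i < N \<Longrightarrow> prob_space (D i)"
    and gF_meas: "\<And>i. i < N \<Longrightarrow> (\<lambda>(x, \<xi>). gF i x \<xi>) \<in> borel_measurable (borel \<Otimes>\<^sub>M D i)"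
    and unbiased: "\<And>i x. i < N \<Longrightarrow> integrable (D i) (gF i x) \<and> integral\<^sup>L (D i) (gF i x) = g i x"
    and noise: "\<And>i x. i < N \<Longrightarrow> (AE \<xi> in D i. norm (gF i x \<xi> - g i x) \<le> \<sigma>)"
    \<comment> \<open>heterogeneity, with grad f = (1/N) sum_i grad f_i\<close>
    and hetero: "\<And>i x. i < N \<Longrightarrow>
        norm (g i x) \<le> \<kappa> + \<rho> * norm ((1 / real N) *\<^sub>R (\<Sum>j<N. g j x))"
    \<comment> \<open>parameters\<close>
    and C: "C \<ge> 1"
    and step1: "2 * \<eta> * real I * ((1 + exp C - (exp C - 1) / C) * L0 + ((exp C - 1) / C) * L1 * \<kappa>
                 + ((exp C - 1) / C) * L1 * \<rho> * (\<sigma> + \<gamma> / \<eta>)) \<le> 1"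
    and step2: "max (2 * \<eta> * real I * (2 * \<sigma> + \<gamma> / \<eta>)) (\<gamma> * real I) \<le> C / L1"
    \<comment> \<open>fresh independent samples of the round\<close>
    and M: "prob_space M"
    and tx_dist: "\<And>i. i < N \<Longrightarrow> tx i \<in> measurable M (D i) \<and> distr M (D i) (tx i) = D i"
    and xs_dist: "\<And>i k. i < N \<Longrightarrow> k < I \<Longrightarrow> xs i k \<in> measurable M (D i) \<and> distr M (D i) (xs i k) = D i"
    and indep: "prob_space.indep_vars M (\<lambda>j. case j of Inl i \<Rightarrow> D i | Inr (i, k) \<Rightarrow> D i)
                  (\<lambda>j. case j of Inl i \<Rightarrow> tx i | Inr (i, k) \<Rightarrow> xs i k)
                  (Inl ` {..<N} \<union> Inr ` ({..<N} \<times> {..<I}))"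
    and i: "i < N" and t: "1 \<le> k" "k \<le> I"
  shows
    "(\<integral>\<omega>. indicator (ep_event N \<eta> \<gamma> gF xbar tx) \<omega> * (norm (ep_x N \<eta> \<gamma> gF xbar tx xs i k \<omega> - xbar))\<^sup>2 \<partial>M)
       \<le> 36 * measure M (ep_event N \<eta> \<gamma> gF xbar tx \<inter> space M) * (real I)\<^sup>2 * \<eta>\<^sup>2
            * (norm ((1 / real N) *\<^sub>R (\<Sum>j<N. g j xbar)))\<^sup>2
         + 126 * measure M (ep_event N \<eta> \<gamma> gF xbar tx \<inter> space M) * (real I)\<^sup>2 * \<eta>\<^sup>2 * \<sigma>\<^sup>2
     \<and> (\<integral>\<omega>. indicator (ep_event N \<eta> \<gamma> gF xbar tx) \<omega> * (norm (ep_x N \<eta> \<gamma> gF xbar tx xs i k \<omega> - xbar))\<^sup>2 \<partial>M)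
       \<le> 18 * measure M (ep_event N \<eta> \<gamma> gF xbar tx \<inter> space M) * (real I)\<^sup>2 * \<eta> * \<gamma>
            * norm ((1 / real N) *\<^sub>R (\<Sum>j<N. g j xbar))
         + 18 * measure M (ep_event N \<eta> \<gamma> gF xbar tx \<inter> space M) * (real I)\<^sup>2 * \<eta>\<^sup>2
            * (\<gamma> * \<sigma> / \<eta> + 5 * \<sigma>\<^sup>2)"
proof -
  interpret prob_space M
    by (rule M)
  interpret L0_L1_smooth "g i" "H i" L0 L1
    using hess smooth L0 L1 i by unfold_locales auto
  define Ev where "Ev = ep_event N \<eta> \<gamma> gF xbar tx"
  define d where "d \<omega> = norm (ep_x N \<eta> \<gamma> gF xbar tx xs i k \<omega> - xbar)" for \<omega>
  define F where "F = norm ((1 / real N) *\<^sub>R (\<Sum>j<N. g j xbar))"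
  define b1 where "b1 = 36 * (real I)\<^sup>2 * \<eta>\<^sup>2 * F\<^sup>2 + 126 * (real I)\<^sup>2 * \<eta>\<^sup>2 * \<sigma>\<^sup>2"
  define b2 where "b2 = 18 * (real I)\<^sup>2 * \<eta> * \<gamma> * F + 18 * (real I)\<^sup>2 * \<eta>\<^sup>2 * (\<gamma> * \<sigma> / \<eta> + 5 * \<sigma>\<^sup>2)"
  have \<sigma>: "\<sigma> \<ge> 0"
    using prob_space.AE_norm_le_imp_nonneg[OF Dprob noise] i by blast
  have "AE \<omega> in M. \<forall>s\<in>{..<k}. norm (gF i (ep_x N \<eta> \<gamma> gF xbar tx xs i s \<omega>) (xs i s \<omega>)
                             - g i (ep_x N \<eta> \<gamma> gF xbar tx xs i s \<omega>)) \<le> \<sigma>"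
    using t xs_dist i by (intro AE_finite_allI ep_local_noise_AE[OF M gF_meas indep] borel_measurable noise) auto
  moreover have "AE \<omega> in M. \<forall>j<N. norm (gF j xbar (tx j \<omega>) - g j xbar) \<le> \<sigma>"
    using tx_dist noise by (rule ep_server_noise_AE)
  ultimately have "AE \<omega> in M. \<omega> \<in> Ev \<longrightarrow> (d \<omega>)\<^sup>2 \<le> b1 \<and> (d \<omega>)\<^sup>2 \<le> b2"
    unfolding Ev_def d_def F_def b1_def b2_def
    by eventually_elim (use N i t(2) eta gam \<sigma> rho C hetero step1 step2 in
      \<open>intro impI ep_drift_sq_bounds[where g = g and H = H and i = i, OF L0_L1_smooth_axioms]; auto\<close>)
  moreover have "Ev \<inter> space M \<in> sets M"
    unfolding Ev_def using gF_meas tx_dist by (intro sets_ep_event) auto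
  moreover have "b1 \<ge> 0" "b2 \<ge> 0"
    using \<sigma> eta gam by (simp_all add: b1_def b2_def F_def)
  ultimately have "(\<integral>\<omega>. indicator Ev \<omega> * (d \<omega>)\<^sup>2 \<partial>M) \<le> b1 * measure M (Ev \<inter> space M)
    \<and> (\<integral>\<omega>. indicator Ev \<omega> * (d \<omega>)\<^sup>2 \<partial>M) \<le> b2 * measure M (Ev \<inter> space M)"
    by (intro conjI integral_indicator_mult_le) (auto elim: AE_mp)
  then show ?thesis
    unfolding Ev_def d_def F_def b1_def b2_def by (simp add: algebra_simps)
qed

end
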